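(* Let $m$ be a string transduction. Then $m$ is realized by a finite visit 2gsm if and only if $m$ is realized by a 2gsm and $m$ is finitary.
   Context: A 2gsm is $M=(Q,\Sigma_1,\Sigma_2,\delta,q_{in},q_f)$ with finite state set $Q$ and instructions $(p,\sigma,q_1,\alpha_1,\epsilon_1,q_0,\alpha_0,\epsilon_0)$, $p\neq q_f$, $\sigma\in\Sigma_1\cup\{\vdash,\dashv\}$, $\alpha_i\in\Sigma_2^*$, $\epsilon_i\in\{-1,0,+1\}$. On input $w$ the read-only tape is $\vdash w\dashv$ (positions $0..|w|+1$); start in $q_{in}$ at position 0; in state $p$ any instruction starting with $p$ may be executed: if the scanned symbol is $\sigma$, go to $q_1$, append $\alpha_1$ to the one-way output tape and move by $\epsilon_1$, else do the same with $(q_0,\alpha_0,\epsilon_0)$; the head may not leave the tape. $M$ realizes the relation of all $(w,z)$ such that some computation reaches $q_f$ having written $z$ (a successful computation for $(w,z)$). A computation is $k$-visiting if each tape position is visited at most $k$ times. $M$ is finite visit if there is a constant $k$ such that for every pair $(w,z)$ in the relation realized by $M$ there is a $k$-visiting successful computation for $(w,z)$. A relation $m$ is finitary if $\{z\mid(w,z)\in m\}$ is finite for every $w$ in the domain of $m$. *)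

theory Defs
  imports Main
begin

datatype 'a tsym = LEnd | REnd | Sym 'a

text \<open>An instruction (p, sigma, q1, alpha1, eps1, q0, alpha0, eps0).\<close>
type_synonym ('a,'b) instr = "nat \<times> 'a tsym \<times> nat \<times> 'b list \<times> int \<times> nat \<times> 'b list \<times> int"

record ('a,'b) gsm2 =
  states :: "nat set"
  inalph :: "'a set"
  outalph :: "'b set"
  delta :: "('a,'b) instr set"
  qin :: nat
  qf :: nat

definition is_2gsm :: "('a,'b) gsm2 \<Rightarrow> bool" where
  "is_2gsm M \<longleftrightarrow> finite (states M) \<and> finite (inalph M) \<and> finite (outalph M)
     \<and> finite (delta M) \<and> qin M \<in> states M \<and> qf M \<in> states M
     \<and> (\<forall>(p,\<sigma>,q1,a1,e1,q0,a0,e0) \<in> delta M.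
          p \<in> states M \<and> p \<noteq> qf M \<and> \<sigma> \<in> Sym ` inalph M \<union> {LEnd, REnd}
          \<and> q1 \<in> states M \<and> a1 \<in> lists (outalph M) \<and> e1 \<in> {-1,0,1}
          \<and> q0 \<in> states M \<and> a0 \<in> lists (outalph M) \<and> e0 \<in> {-1,0,1})"

text \<open>The read-only tape contents on input w: positions 0 .. length w + 1.\<close>
definition tape :: "'a list \<Rightarrow> 'a tsym list" where
  "tape w = [LEnd] @ map Sym w @ [REnd]"

text \<open>Configurations: (state, head position, output written so far).\<close>
type_synonym 'b config = "nat \<times> nat \<times> 'b list"

definition step :: "('a,'b) gsm2 \<Rightarrow> 'a list \<Rightarrow> 'b config \<Rightarrow> 'b config \<Rightarrow> bool" where
  "step M w c c' \<longleftrightarrow> (case c of (p,i,u) \<Rightarrow> case c' of (p',i',u') \<Rightarrow>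
     i' \<le> length w + 1 \<and>
     (\<exists>(p0,\<sigma>,q1,a1,e1,q0,a0,e0) \<in> delta M. p0 = p \<and>
        (if tape w ! i = \<sigma>
         then p' = q1 \<and> u' = u @ a1 \<and> int i' = int i + e1
         else p' = q0 \<and> u' = u @ a0 \<and> int i' = int i + e0)))"

definition computation :: "('a,'b) gsm2 \<Rightarrow> 'a list \<Rightarrow> 'b config list \<Rightarrow> bool" where
  "computation M w cs \<longleftrightarrow> cs \<noteq> [] \<and> hd cs = (qin M, 0, [])
     \<and> (\<forall>i. Suc i < length cs \<longrightarrow> step M w (cs ! i) (cs ! Suc i))"

definition successful :: "('a,'b) gsm2 \<Rightarrow> 'a list \<Rightarrow> 'b list \<Rightarrow> 'b config list \<Rightarrow> bool" where
  "successful M w z cs \<longleftrightarrow> computation M w cs \<and> fst (last cs) = qf M \<and> snd (snd (last cs)) = z"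

definition realized :: "('a,'b) gsm2 \<Rightarrow> ('a list \<times> 'b list) set" where
  "realized M = {(w,z). w \<in> lists (inalph M) \<and> (\<exists>cs. successful M w z cs)}"

definition visits :: "'b config list \<Rightarrow> nat \<Rightarrow> nat" where
  "visits cs j = length (filter (\<lambda>c. fst (snd c) = j) cs)"

definition k_visiting :: "nat \<Rightarrow> 'b config list \<Rightarrow> bool" where
  "k_visiting k cs \<longleftrightarrow> (\<forall>j. visits cs j \<le> k)"

definition finite_visit :: "('a,'b) gsm2 \<Rightarrow> bool" where
  "finite_visit M \<longleftrightarrow> (\<exists>k. \<forall>(w,z) \<in> realized M. \<exists>cs. successful M w z cs \<and> k_visiting k cs)"

definition finitary :: "('a \<times> 'b) set \<Rightarrow> bool" where
  "finitary m \<longleftrightarrow> (\<forall>w \<in> Domain m. finite {z. (w,z) \<in> m})"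

end

theory Submission
  imports Defs
begin

(* A k-visiting computation on w has at most (|w| + 2) k steps, each emitting boundedly many
   symbols, so the outputs for w have bounded length: finite visit implies finitary.
   Conversely, a shortest successful computation never meets the same state at the same tape
   cell twice.  If no output is written between the two meetings, the loop can be cut out,
   contradicting minimality; otherwise it can be iterated, since a run from a configuration
   appends an output independent of what was written before, and this yields infinitely many
   outputs for w.  Hence each cell is visited at most |Q| times, so the machine itself is
   finite visit. *)

lemma successively_invariant:
  assumes "successively R xs" and "P (hd xs)"
    and "\<And>x y. R x y \<Longrightarrow> P x \<Longrightarrow> P y" and "x \<in> set xs"
  shows "P x"
  using assms by (induction R xs rule: successively.induct) auto

lemma successively_rtranclp_nth:
  assumes "successively R xs" and "i \<le> j" and "j < length xs"
  shows "R\<^sup>*\<^sup>* (xs ! i) (xs ! j)"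
  using assms(2,3)
proof (induction j rule: dec_induct)
  case base
  show ?case by simp
next
  case (step j)
  then show ?case
    using successively_nth[OF assms(1), of j] by (simp add: rtranclp.rtrancl_into_rtrancl)
qed

lemma successively_rtranclp_hd_last:
  assumes "successively R xs" and "xs \<noteq> []"
  shows "R\<^sup>*\<^sup>* (hd xs) (last xs)"
  using successively_rtranclp_nth[OF assms(1), of 0 "length xs - 1"] assms(2)
  by (simp add: hd_conv_nth last_conv_nth)

lemma rtranclp_successively:
  "R\<^sup>*\<^sup>* x y \<Longrightarrow> \<exists>xs. successively R (x # xs) \<and> last (x # xs) = y"
proof (induction rule: converse_rtranclp_induct)
  case base
  show ?case by (intro exI[of _ "[]"]) simp
next
  case (step x z)
  then obtain xs where "successively R (z # xs)" "last (z # xs) = y" by blast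
  with \<open>R x z\<close> show ?case by (intro exI[of _ "z # xs"]) simp
qed

lemma not_distinct_map_decomp:
  assumes "\<not> distinct (map f xs)"
  obtains A x B y C where "xs = A @ x # B @ y # C" and "f x = f y"
proof -
  have split: "\<exists>A x R. ys = A @ x # R \<and> f x = b \<and> map f R = bs"
    if "map f ys = as @ b # bs" for ys as b bs
    using that by (auto simp: map_eq_append_conv map_eq_Cons_conv)
  obtain as b bs cs where "map f xs = as @ b # bs @ b # cs"
    using not_distinct_decomp[OF assms] by auto
  from split[OF this] obtain A x R
    where "xs = A @ x # R" and "f x = b" and "map f R = bs @ b # cs"
    by blast
  moreover from split[OF this(3)] obtain B y C where "R = B @ y # C" "f y = b"
    by blast
  ultimately show thesis using that[of A x B y C] by simp
qed

lemma step_output_append_iff: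
  "step M w (p, i, u) (p', i', u @ a) \<longleftrightarrow> step M w (p, i, v) (p', i', v @ a)"
  by (simp add: step_def)

lemma step_appends_output:
  assumes "step M w (p, i, u) (p', i', u')"
  shows "\<exists>a. u' = u @ a"
  using assms by (auto simp: step_def split: if_splits)

definition output_bound :: "('a, 'b) gsm2 \<Rightarrow> nat" where
  "output_bound M = (\<Sum>(_, _, _, a1, _, _, a0, _) \<in> delta M. length a1 + length a0)"

lemma step_output_length_le:
  assumes "finite (delta M)" and "step M w (p, i, u) (p', i', u')"
  shows "length u' \<le> length u + output_bound M"
proof -
  obtain p0 \<sigma> q1 a1 e1 q0 a0 e0
    where instr: "(p0, \<sigma>, q1, a1, e1, q0, a0, e0) \<in> delta M"
    and out: "u' = u @ a1 \<or> u' = u @ a0"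
    using assms(2) by (auto simp: step_def split: if_splits)
  have "length a1 + length a0 \<le> output_bound M"
    using member_le_sum[OF instr, of "\<lambda>(_, _, _, a1, _, _, a0, _). length a1 + length a0"]
      assms(1)
    by (simp add: output_bound_def)
  with out show ?thesis by auto
qed

fun valid_config :: "('a, 'b) gsm2 \<Rightarrow> 'a list \<Rightarrow> 'b config \<Rightarrow> bool" where
  "valid_config M w (p, i, u) \<longleftrightarrow>
     p \<in> states M \<and> i \<le> length w + 1 \<and> u \<in> lists (outalph M)"

lemma step_valid_config:
  assumes "is_2gsm M" and "step M w c c'" and "valid_config M w c"
  shows "valid_config M w c'"
  using assms unfolding is_2gsm_def
  by (cases c; cases c') (fastforce simp: step_def split: if_splits)

lemma computation_iff_successively:
  "computation M w cs \<longleftrightarrow>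
     cs \<noteq> [] \<and> hd cs = (qin M, 0, []) \<and> successively (step M w) cs"
  by (simp add: computation_def successively_conv_nth)

lemma computation_valid_config:
  assumes "is_2gsm M" and "computation M w cs" and "c \<in> set cs"
  shows "valid_config M w c"
proof (rule successively_invariant[of "step M w" cs])
  show "successively (step M w) cs" and "valid_config M w (hd cs)"
    using assms(1,2) by (auto simp: computation_iff_successively is_2gsm_def)
qed (use assms step_valid_config in blast)+

lemma ex_successful_iff_rtranclp:
  "(\<exists>cs. successful M w z cs) \<longleftrightarrow> (\<exists>i. (step M w)\<^sup>*\<^sup>* (qin M, 0, []) (qf M, i, z))"
proof
  assume "\<exists>cs. successful M w z cs"
  then obtain cs where cs: "successful M w z cs" ..
  then obtain cs' where cs': "cs = (qin M, 0, []) # cs'"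
    by (cases cs) (auto simp: successful_def computation_def)
  obtain i where "last cs = (qf M, i, z)"
    using cs by (cases "last cs") (auto simp: successful_def)
  moreover have "(step M w)\<^sup>*\<^sup>* (hd cs) (last cs)"
    using cs by (intro successively_rtranclp_hd_last)
      (auto simp: successful_def computation_iff_successively)
  ultimately show "\<exists>i. (step M w)\<^sup>*\<^sup>* (qin M, 0, []) (qf M, i, z)"
    using cs' by auto
next
  assume "\<exists>i. (step M w)\<^sup>*\<^sup>* (qin M, 0, []) (qf M, i, z)"
  then obtain i cs where "successively (step M w) ((qin M, 0, []) # cs)"
    and "last ((qin M, 0, []) # cs) = (qf M, i, z)"
    using rtranclp_successively by metis
  then show "\<exists>cs. successful M w z cs"
    by (auto simp: successful_def computation_iff_successively)
qed

lemma steps_output_append: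
  assumes "(step M w)\<^sup>*\<^sup>* (p, i, u) (p', i', u')"
  shows "\<exists>t. u' = u @ t \<and> (\<forall>v. (step M w)\<^sup>*\<^sup>* (p, i, v) (p', i', v @ t))"
  using assms
proof (induct "(p', i', u')" arbitrary: p' i' u' rule: rtranclp_induct)
  case base
  show ?case by (intro exI[of _ "[]"]) simp
next
  case (step c)
  obtain q j x where c: "c = (q, j, x)" by (cases c)
  with step(3) obtain t
    where t: "x = u @ t" "\<And>v. (step M w)\<^sup>*\<^sup>* (p, i, v) (q, j, v @ t)"
    by blast
  from step(2) c obtain a where a: "u' = x @ a"
    using step_appends_output by blast
  have "step M w (q, j, v @ t) (p', i', (v @ t) @ a)" for v
    using step(2) c a step_output_append_iff by metis
  then have "(step M w)\<^sup>*\<^sup>* (p, i, v) (p', i', v @ t @ a)" for v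
    using t(2) by (metis append_assoc rtranclp.rtrancl_into_rtrancl)
  with a t(1) show ?case by (intro exI[of _ "t @ a"]) simp
qed

lemma rtranclp_pump_loop:
  assumes "\<And>v. R\<^sup>*\<^sup>* (p, i, v) (p, i, v @ t)"
  shows "R\<^sup>*\<^sup>* (p, i, v) (p, i, v @ concat (replicate n t))"
proof (induction n arbitrary: v)
  case 0
  show ?case by simp
next
  case (Suc n)
  from assms[of v] Suc[of "v @ t"] show ?case by simp
qed

lemma length_eq_sum_visits:
  assumes "\<forall>(p, i, u) \<in> set cs. i \<le> N"
  shows "length cs = (\<Sum>j\<le>N. visits cs j)"
  using assms
proof (induction cs)
  case Nil
  show ?case by (simp add: visits_def)
next
  case (Cons c cs)
  have "(\<Sum>j\<le>N. visits (c # cs) j) =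
      (\<Sum>j\<le>N. (if fst (snd c) = j then 1 else 0) + visits cs j)"
    by (intro sum.cong) (auto simp: visits_def)
  also have "\<dots> = 1 + (\<Sum>j\<le>N. visits cs j)"
    using Cons.prems by (cases c) (simp add: sum.distrib)
  finally show ?case using Cons by auto
qed

lemma successively_output_length_le:
  assumes "finite (delta M)" and "successively (step M w) (c # cs)"
  shows "length (snd (snd (last (c # cs))))
           \<le> length (snd (snd c)) + length cs * output_bound M"
  using assms(2)
proof (induction cs arbitrary: c)
  case Nil
  show ?case by simp
next
  case (Cons c' cs)
  then have "step M w c c'" and "successively (step M w) (c' # cs)"
    by simp_all
  moreover have "length (snd (snd c')) \<le> length (snd (snd c)) + output_bound M"
    using step_output_length_le[OF assms(1)] \<open>step M w c c'\<close>
    by (cases c; cases c') fastforce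
  ultimately show ?case using Cons.IH by fastforce
qed

lemma successful_output_length_le:
  assumes "is_2gsm M" and "successful M w z cs" and "k_visiting k cs"
  shows "length z \<le> (length w + 2) * k * output_bound M"
proof -
  have comp: "computation M w cs" and z: "z = snd (snd (last cs))"
    using assms(2) by (simp_all add: successful_def)
  then obtain cs' where cs: "cs = (qin M, 0, []) # cs'"
    by (cases cs) (auto simp: computation_def)
  have "\<forall>(p, i, u) \<in> set cs. i \<le> length w + 1"
    using computation_valid_config[OF assms(1) comp] by fastforce
  then have "length cs = (\<Sum>j\<le>length w + 1. visits cs j)"
    by (rule length_eq_sum_visits)
  also have "\<dots> \<le> (length w + 2) * k"
    using assms(3) sum_mono[of "{..length w + 1}" "visits cs" "\<lambda>_. k"]
    by (simp add: k_visiting_def)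
  finally have "length cs' \<le> (length w + 2) * k" using cs by simp
  moreover have "length z \<le> length cs' * output_bound M"
    using successively_output_length_le[of M w "(qin M, 0, [])" cs'] assms(1) comp cs z
    by (simp add: is_2gsm_def computation_iff_successively)
  ultimately show ?thesis
    by (meson le_trans mult_le_mono1)
qed

lemma finite_visit_imp_finitary:
  assumes "is_2gsm M" and "finite_visit M"
  shows "finitary (realized M)"
  unfolding finitary_def
proof
  fix w
  obtain k where k: "\<forall>(w, z) \<in> realized M. \<exists>cs. successful M w z cs \<and> k_visiting k cs"
    using assms(2) by (auto simp: finite_visit_def)
  have "{z. (w, z) \<in> realized M}
          \<subseteq> {z. set z \<subseteq> outalph M \<and> length z \<le> (length w + 2) * k * output_bound M}"
  proof safe
    fix z
    assume "(w, z) \<in> realized M"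
    then obtain cs where cs: "successful M w z cs" "k_visiting k cs"
      using k by blast
    then show "length z \<le> (length w + 2) * k * output_bound M"
      using successful_output_length_le[OF assms(1)] by blast
    have comp: "computation M w cs"
      using cs(1) by (simp add: successful_def)
    then have "valid_config M w (last cs)"
      using computation_valid_config[OF assms(1) comp] by (simp add: computation_def)
    then show "x \<in> outalph M" if "x \<in> set z" for x
      using cs(1) that by (cases "last cs") (auto simp: successful_def)
  qed
  moreover have "finite (outalph M)"
    using assms(1) by (simp add: is_2gsm_def)
  ultimately show "finite {z. (w, z) \<in> realized M}"
    using finite_lists_length_le finite_subset by blast
qed

fun state_pos :: "'b config \<Rightarrow> nat \<times> nat" where
  "state_pos (p, i, u) = (p, i)"

lemma successful_remove_loop:
  assumes "successful M w z (A @ c # B @ c # C)"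
  shows "successful M w z (A @ c # C)"
proof -
  have "successively (step M w) (A @ c # B @ c # C)"
    using assms by (simp add: successful_def computation_iff_successively)
  then have "successively (step M w) (A @ c # C)"
    using successively_append_iff[of "step M w" "c # B" "c # C"]
    by (auto simp: successively_append_iff)
  moreover have "hd (A @ c # C) = hd (A @ c # B @ c # C)" by (cases A) simp_all
  moreover have "last (A @ c # C) = last (A @ c # B @ c # C)" by (cases C) simp_all
  ultimately show ?thesis
    using assms by (simp add: successful_def computation_iff_successively)
qed

lemma successful_pump_loop:
  assumes "successful M w z (A @ (p, i, u) # B @ (p, i, u') # C)" and "u' \<noteq> u"
  shows "infinite {z. \<exists>cs. successful M w z cs}"
proof -
  define cs where "cs = A @ (p, i, u) # B @ (p, i, u') # C"
  obtain j where last: "last cs = (qf M, j, z)"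
    using assms(1) by (cases "last cs") (auto simp: successful_def cs_def)
  have steps: "(step M w)\<^sup>*\<^sup>* (cs ! a) (cs ! b)" if "a \<le> b" "b < length cs" for a b
    using assms(1) that by (intro successively_rtranclp_nth)
      (auto simp: successful_def computation_iff_successively cs_def)
  have "cs ! 0 = (qin M, 0, [])"
    using assms(1) by (simp add: cs_def successful_def computation_def hd_conv_nth)
  then have prefix: "(step M w)\<^sup>*\<^sup>* (qin M, 0, []) (p, i, u)"
    using steps[of 0 "length A"] by (simp add: cs_def nth_append)
  have "(step M w)\<^sup>*\<^sup>* (p, i, u) (p, i, u')"
    using steps[of "length A" "Suc (length A + length B)"] by (simp add: cs_def nth_append)
  then obtain t where t: "u' = u @ t" "\<And>v. (step M w)\<^sup>*\<^sup>* (p, i, v) (p, i, v @ t)"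
    using steps_output_append by blast
  have "(step M w)\<^sup>*\<^sup>* (p, i, u') (qf M, j, z)"
    using steps[of "Suc (length A + length B)" "length cs - 1"] last
    by (simp add: cs_def nth_append last_conv_nth)
  then obtain s where s: "z = u' @ s" "\<And>v. (step M w)\<^sup>*\<^sup>* (p, i, v) (qf M, j, v @ s)"
    using steps_output_append by blast
  have "(step M w)\<^sup>*\<^sup>* (qin M, 0, []) (qf M, j, u @ concat (replicate n t) @ s)"
    for n
      using rtranclp_trans[OF prefix rtranclp_pump_loop[OF t(2), of u n]] s(2)
    by (metis append_assoc rtranclp_trans)
  then have "range (\<lambda>n. u @ concat (replicate n t) @ s) \<subseteq> {z. \<exists>cs. successful M w z cs}"
    by (auto simp: ex_successful_iff_rtranclp)
  moreover have "inj (\<lambda>n. u @ concat (replicate n t) @ s)"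
    using t(1) assms(2)
    by (auto simp: inj_def length_concat sum_list_replicate dest!: arg_cong[of _ _ length])
  ultimately show ?thesis
    using finite_imageD infinite_UNIV_nat finite_subset by blast
qed

lemma shortest_successful_distinct:
  assumes "successful M w z cs"
    and shortest: "\<And>cs'. successful M w z cs' \<Longrightarrow> length cs \<le> length cs'"
    and "finite {z. \<exists>cs. successful M w z cs}"
  shows "distinct (map state_pos cs)"
proof (rule ccontr)
  assume "\<not> distinct (map state_pos cs)"
  then obtain A c B c' C where cs: "cs = A @ c # B @ c' # C"
    and "state_pos c = state_pos c'"
    by (rule not_distinct_map_decomp)
  then obtain p i u u' where c: "c = (p, i, u)" and c': "c' = (p, i, u')"
    by (cases c; cases c') auto
  show False
  proof (cases "u' = u")
    case True
    then have "successful M w z (A @ c # C)"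
      using successful_remove_loop assms(1) cs c c' by metis
    with shortest show False
      unfolding cs by fastforce
  next
    case False
    then show False
      using successful_pump_loop assms(1,3) cs c c' by metis
  qed
qed

lemma distinct_state_pos_k_visiting:
  assumes "is_2gsm M" and "computation M w cs" and "distinct (map state_pos cs)"
  shows "k_visiting (card (states M)) cs"
  unfolding k_visiting_def
proof
  fix j
  let ?at_j = "map state_pos (filter (\<lambda>c. fst (snd c) = j) cs)"
  have "visits cs j = length ?at_j"
    by (simp add: visits_def)
  also have "\<dots> = card (set ?at_j)"
    using distinct_map_filter[OF assms(3)] by (rule distinct_card[symmetric])
  also have "\<dots> \<le> card (states M \<times> {j})"
  proof (rule card_mono)
    show "finite (states M \<times> {j})"
      using assms(1) by (simp add: is_2gsm_def)
    show "set ?at_j \<subseteq> states M \<times> {j}"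
      using computation_valid_config[OF assms(1,2)] by fastforce
  qed
  finally show "visits cs j \<le> card (states M)"
    by (simp add: card_cartesian_product)
qed

lemma finitary_imp_finite_visit:
  assumes "is_2gsm M" and "finitary (realized M)"
  shows "finite_visit M"
  unfolding finite_visit_def
proof (intro exI[of _ "card (states M)"] ballI, clarify)
  fix w z
  assume wz: "(w, z) \<in> realized M"
  then obtain cs0 where "successful M w z cs0"
    by (auto simp: realized_def)
  then obtain cs where cs: "successful M w z cs"
    and shortest: "\<And>cs'. successful M w z cs' \<Longrightarrow> length cs \<le> length cs'"
    using ex_has_least_nat[of "successful M w z" cs0 length] by blast
  have "{z. \<exists>cs. successful M w z cs} = {z. (w, z) \<in> realized M}"
    using wz by (auto simp: realized_def)
  then have "finite {z. \<exists>cs. successful M w z cs}"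
    using assms(2) wz by (auto simp: finitary_def)
  with cs shortest have "distinct (map state_pos cs)"
    by (rule shortest_successful_distinct)
  with assms(1) cs have "k_visiting (card (states M)) cs"
    by (auto simp: successful_def intro: distinct_state_pos_k_visiting)
  with cs show "\<exists>cs. successful M w z cs \<and> k_visiting (card (states M)) cs"
    by blast
qed

theorem lemma6p1:
  fixes \<Sigma>1 :: "'a set" and \<Sigma>2 :: "'b set" and m :: "('a list \<times> 'b list) set"
  assumes "finite \<Sigma>1" and "finite \<Sigma>2" and "m \<subseteq> lists \<Sigma>1 \<times> lists \<Sigma>2"
  shows "(\<exists>M :: ('a,'b) gsm2. is_2gsm M \<and> inalph M = \<Sigma>1 \<and> outalph M = \<Sigma>2
              \<and> finite_visit M \<and> realized M = m)
     \<longleftrightarrow> (\<exists>M :: ('a,'b) gsm2. is_2gsm M \<and> inalph M = \<Sigma>1 \<and> outalph M = \<Sigma>2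
              \<and> realized M = m) \<and> finitary m"
  using finite_visit_imp_finitary finitary_imp_finite_visit by blast

end
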